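(* In the split CP-RPCA sampling model described in the context, suppose the test location $(i_\ast,j_\ast)$ satisfies $(i_\ast,j_\ast)\mid\Omega_{\mathrm{obs}}\sim\mathrm{Unif}(\Omega_{\mathrm{obs}}^{c})$. Let $n_{\mathrm{cal}}=|\Omega_{\mathrm{cal}}'|$ and write $\Omega_{\mathrm{cal}}'\cup\{(i_\ast,j_\ast)\}=\{(i_1,j_1),\ldots,(i_{n_{\mathrm{cal}}+1},j_{n_{\mathrm{cal}}+1})\}$. Then for every $k\in\{1,\ldots,n_{\mathrm{cal}}+1\}$, $$\mathbb{P}\big\{(i_\ast,j_\ast)=(i_k,j_k)\ \big|\ \Omega_{\mathrm{cal}}'\cup\{(i_\ast,j_\ast)\}=\{(i_1,j_1),\ldots,(i_{n_{\mathrm{cal}}+1},j_{n_{\mathrm{cal}}+1})\},\ \Omega_{\mathrm{tr}}\big\}=\omega_{i_kj_k},$$ where $\omega_{i_kj_k}=h_{i_kj_k}\big/\sum_{k'=1}^{n_{\mathrm{cal}}+1}h_{i_{k'}j_{k'}}$ and $h_{ij}=(1-p_{ij})/p_{ij}$ are the odds ratios.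
   Context: Let $d_1,d_2\ge1$ and $[d]=\{1,\ldots,d\}$. Observation indicators $Z_{ij}\sim\mathrm{Bern}(p_{ij})$ are independent over $(i,j)\in[d_1]\times[d_2]$, with nonzero probabilities $p_{ij}$; the observed set is $\Omega_{\mathrm{obs}}=\{(i,j):Z_{ij}=1\}$ and $\Omega_{\mathrm{obs}}^c$ is its complement in $[d_1]\times[d_2]$. Given a splitting proportion $q\in(0,1)$, independent $W_{ij}\sim\mathrm{Bern}(q)$ (independent of $Z$) split the observed set into a training set $\Omega_{\mathrm{tr}}=\{(i,j)\in\Omega_{\mathrm{obs}}:W_{ij}=1\}$ and a calibration set $\Omega_{\mathrm{cal}}=\{(i,j)\in\Omega_{\mathrm{obs}}:W_{ij}=0\}$. In the paper's sampling model, each element of $\Omega_{\mathrm{cal}}$ is independently (of everything else) flagged as contaminated with probability $\beta\in(0,1)$ and discarded; the discarded elements form $\Omega_{\mathrm{drop}}$ and the remaining ones form the trimmed calibration set $\Omega_{\mathrm{cal}}'$, so $\Omega_{\mathrm{cal}}=\Omega_{\mathrm{cal}}'\cup\Omega_{\mathrm{drop}}$. *)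

theory Defs
  imports "HOL-Probability.Probability"
begin

type_synonym cell = "nat \<times> nat"
(* outcome: (Z, W, F, test location); F = contamination flags *)
type_synonym outcome = "(cell \<Rightarrow> bool) \<times> (cell \<Rightarrow> bool) \<times> (cell \<Rightarrow> bool) \<times> cell option"

definition grid :: "nat \<Rightarrow> nat \<Rightarrow> cell set" where
  "grid d1 d2 = {1..d1} \<times> {1..d2}"

definition odds :: "(cell \<Rightarrow> real) \<Rightarrow> cell \<Rightarrow> real" where
  "odds p c = (1 - p c) / p c"

definition obs_set :: "nat \<Rightarrow> nat \<Rightarrow> outcome \<Rightarrow> cell set" where
  "obs_set d1 d2 \<omega> = (case \<omega> of (Z, W, F, t) \<Rightarrow> {c \<in> grid d1 d2. Z c})"

definition tr_set :: "nat \<Rightarrow> nat \<Rightarrow> outcome \<Rightarrow> cell set" where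
  "tr_set d1 d2 \<omega> = (case \<omega> of (Z, W, F, t) \<Rightarrow> {c \<in> grid d1 d2. Z c \<and> W c})"

definition cal_set :: "nat \<Rightarrow> nat \<Rightarrow> outcome \<Rightarrow> cell set" where
  "cal_set d1 d2 \<omega> = (case \<omega> of (Z, W, F, t) \<Rightarrow> {c \<in> grid d1 d2. Z c \<and> \<not> W c})"

definition drop_set :: "nat \<Rightarrow> nat \<Rightarrow> outcome \<Rightarrow> cell set" where
  "drop_set d1 d2 \<omega> = (case \<omega> of (Z, W, F, t) \<Rightarrow> {c \<in> cal_set d1 d2 \<omega>. F c})"

definition trimmed_cal_set :: "nat \<Rightarrow> nat \<Rightarrow> outcome \<Rightarrow> cell set" where
  "trimmed_cal_set d1 d2 \<omega> = (case \<omega> of (Z, W, F, t) \<Rightarrow> {c \<in> cal_set d1 d2 \<omega>. \<not> F c})"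

definition test_loc :: "outcome \<Rightarrow> cell option" where
  "test_loc \<omega> = (case \<omega> of (Z, W, F, t) \<Rightarrow> t)"

definition test_loc_pmf :: "cell set \<Rightarrow> cell option pmf" where
  "test_loc_pmf C = (if C = {} then return_pmf None else map_pmf Some (pmf_of_set C))"

definition split_model :: "nat \<Rightarrow> nat \<Rightarrow> (cell \<Rightarrow> real) \<Rightarrow> real \<Rightarrow> real \<Rightarrow> outcome pmf" where
  "split_model d1 d2 p q \<beta> =
     bind_pmf (Pi_pmf (grid d1 d2) False (\<lambda>c. bernoulli_pmf (p c))) (\<lambda>Z.
     bind_pmf (Pi_pmf (grid d1 d2) False (\<lambda>_. bernoulli_pmf q)) (\<lambda>W.
     bind_pmf (Pi_pmf (grid d1 d2) False (\<lambda>_. bernoulli_pmf \<beta>)) (\<lambda>F.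
     bind_pmf (test_loc_pmf (grid d1 d2 - {c \<in> grid d1 d2. Z c})) (\<lambda>t.
     return_pmf (Z, W, F, t)))))"

(* conditioning event: \<Omega>_cal' \<union> {test} = S  and  \<Omega>_tr = T *)
definition cond_event :: "nat \<Rightarrow> nat \<Rightarrow> cell set \<Rightarrow> cell set \<Rightarrow> outcome set" where
  "cond_event d1 d2 S T = {\<omega>. (\<exists>t. test_loc \<omega> = Some t \<and> insert t (trimmed_cal_set d1 d2 \<omega>) = S)
                              \<and> tr_set d1 d2 \<omega> = T}"

end

theory Submission
  imports Defs
begin

(* Exchanging two cells x and y of S in all of Z, W, F and the test location maps the
   event "conditioning event and test location x" bijectively onto the same event for y.
   W and F are i.i.d. and the test location is uniform on the unobserved cells, whose number
   does not change, so only the observation indicators at x and y alter the probability: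
   the factor (1 - p x) p y becomes p x (1 - p y). Hence the probability of the test
   location being x is proportional to the odds ratio of x, and normalising over S gives
   the weights. *)

lemma pmf_bind_map_Pair:
  "pmf (bind_pmf M (\<lambda>a. map_pmf (Pair a) (N a))) (a, b) = pmf M a * pmf (N a) b"
proof -
  have "pmf (map_pmf (Pair x) (N x)) (a, b) = indicator {a} x * pmf (N a) b" for x
  proof (cases "x = a")
    case True
    then show ?thesis by (simp add: pmf_map_inj' inj_on_def)
  next
    case False
    then have "Pair x -` {(a, b)} = {}" by auto
    then show ?thesis using False by (simp add: pmf_map)
  qed
  then show ?thesis
    by (simp add: pmf_bind measure_pmf_single)
qed

lemma pmf_split_model:
  "pmf (split_model d1 d2 p q \<beta>) (Z, W, F, t) =
     pmf (Pi_pmf (grid d1 d2) False (\<lambda>c. bernoulli_pmf (p c))) Z *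
     pmf (Pi_pmf (grid d1 d2) False (\<lambda>_. bernoulli_pmf q)) W *
     pmf (Pi_pmf (grid d1 d2) False (\<lambda>_. bernoulli_pmf \<beta>)) F *
     pmf (test_loc_pmf (grid d1 d2 - {c \<in> grid d1 d2. Z c})) t"
proof -
  have "split_model d1 d2 p q \<beta> =
     bind_pmf (Pi_pmf (grid d1 d2) False (\<lambda>c. bernoulli_pmf (p c))) (\<lambda>Z. map_pmf (Pair Z)
     (bind_pmf (Pi_pmf (grid d1 d2) False (\<lambda>_. bernoulli_pmf q)) (\<lambda>W. map_pmf (Pair W)
     (bind_pmf (Pi_pmf (grid d1 d2) False (\<lambda>_. bernoulli_pmf \<beta>)) (\<lambda>F. map_pmf (Pair F)
     (test_loc_pmf (grid d1 d2 - {c \<in> grid d1 d2. Z c})))))))"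
    unfolding split_model_def by (simp add: map_bind_pmf map_pmf_def bind_assoc_pmf bind_return_pmf)
  then show ?thesis
    by (simp add: pmf_bind_map_Pair mult.assoc)
qed

lemma finite_grid [simp]: "finite (grid d1 d2)"
  by (simp add: grid_def)

lemma pmf_test_loc_pmf_Some:
  "finite C \<Longrightarrow> pmf (test_loc_pmf C) (Some c) = (if c \<in> C then 1 / card C else 0)"
  using pmf_map_inj'[of Some "pmf_of_set C" c] by (auto simp: test_loc_pmf_def)

lemma split_model_test_loc_unobserved:
  assumes "\<omega> \<in> set_pmf (split_model d1 d2 p q \<beta>)" and "test_loc \<omega> = Some c"
  shows "c \<in> grid d1 d2 - obs_set d1 d2 \<omega>"
proof -
  obtain Z W F where \<omega>: "\<omega> = (Z, W, F, Some c)"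
    using assms(2) by (cases \<omega>) (auto simp: test_loc_def)
  have "pmf (test_loc_pmf (grid d1 d2 - {c \<in> grid d1 d2. Z c})) (Some c) \<noteq> 0"
    using assms(1) by (simp add: \<omega> set_pmf_iff pmf_split_model)
  then show ?thesis
    by (simp add: \<omega> obs_set_def pmf_test_loc_pmf_Some split: if_splits)
qed

lemma pmf_Pi_pmf_comp_permutes:
  assumes "finite A" and "\<pi> permutes A"
  shows "pmf (Pi_pmf A dflt (\<lambda>_. N)) (f \<circ> \<pi>) = pmf (Pi_pmf A dflt (\<lambda>_. N)) f"
proof -
  have "inj (\<lambda>g. g \<circ> \<pi>)"
    using permutes_inv_o(1)[OF assms(2)] by (intro injI) (metis comp_assoc comp_id)
  moreover have "Pi_pmf A dflt (\<lambda>_. N) = map_pmf (\<lambda>g. g \<circ> \<pi>) (Pi_pmf A dflt (\<lambda>_. N))"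
    using assms by (intro Pi_pmf_bij_betw) (auto simp: permutes_imp_bij permutes_not_in)
  ultimately show ?thesis
    by (metis pmf_map_inj')
qed

lemma pmf_Pi_bernoulli_comp_transpose:
  fixes p :: "'a \<Rightarrow> real"
  assumes "finite A" "x \<in> A" "y \<in> A" "x \<noteq> y" "\<not> Z x" "Z y"
    and "0 \<le> p x" "p x \<le> 1" "0 \<le> p y" "p y \<le> 1"
  shows "pmf (Pi_pmf A False (\<lambda>c. bernoulli_pmf (p c))) (Z \<circ> Transposition.transpose x y)
           * ((1 - p x) * p y)
       = pmf (Pi_pmf A False (\<lambda>c. bernoulli_pmf (p c))) Z * (p x * (1 - p y))"
proof -
  have outside: "Transposition.transpose x y c = c" if "c \<notin> A" for c
    using that assms(2,3) by (metis transpose_apply_other)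
  show ?thesis
  proof (cases "\<exists>c. c \<notin> A \<and> Z c")
    case True
    then have "\<exists>c. c \<notin> A \<and> (Z \<circ> Transposition.transpose x y) c"
      using outside by auto
    with True show ?thesis
      using assms(1) by (simp add: pmf_Pi_outside)
  next
    case False
    define b where "b c v = pmf (bernoulli_pmf (p c)) v" for c v
    have prod_split: "(\<Prod>c\<in>A. f c) = f x * f y * (\<Prod>c\<in>A - {x, y}. f c)"
      for f :: "'a \<Rightarrow> real"
      using assms(1-4)
      by (simp add: prod.remove[of A x] prod.remove[of "A - {x}" y] Diff_insert2 [symmetric] mult.assoc)
    have rest: "(\<Prod>c\<in>A - {x, y}. b c (Z (Transposition.transpose x y c)))
        = (\<Prod>c\<in>A - {x, y}. b c (Z c))"
      by (rule prod.cong) auto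
    have "pmf (Pi_pmf A False (\<lambda>c. bernoulli_pmf (p c))) Z
        = (1 - p x) * p y * (\<Prod>c\<in>A - {x, y}. b c (Z c))"
      using False assms by (subst pmf_Pi') (auto simp: prod_split b_def)
    moreover have "pmf (Pi_pmf A False (\<lambda>c. bernoulli_pmf (p c))) (Z \<circ> Transposition.transpose x y)
        = p x * (1 - p y) * (\<Prod>c\<in>A - {x, y}. b c (Z c))"
      using False assms outside by (subst pmf_Pi') (auto simp: prod_split b_def rest[unfolded b_def])
    ultimately show ?thesis
      by (simp only: ac_simps)
  qed
qed

lemma Collect_transpose_eq_image:
  assumes "x \<in> A" and "y \<in> A"
  shows "{c \<in> A. P (Transposition.transpose x y c)} = Transposition.transpose x y ` {c \<in> A. P c}"
  using permutes_in_image[OF permutes_swap_id[OF assms]] by (auto simp: in_transpose_image_iff)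

definition transpose_outcome :: "cell \<Rightarrow> cell \<Rightarrow> outcome \<Rightarrow> outcome" where
  "transpose_outcome x y = (\<lambda>(Z, W, F, t).
     (Z \<circ> Transposition.transpose x y, W \<circ> Transposition.transpose x y,
      F \<circ> Transposition.transpose x y, map_option (Transposition.transpose x y) t))"

lemma transpose_outcome_involutory [simp]:
  "transpose_outcome x y (transpose_outcome x y \<omega>) = \<omega>"
  by (cases \<omega>) (simp add: transpose_outcome_def comp_assoc option.map_comp option.map_id)

lemma transpose_outcome_commute: "transpose_outcome x y = transpose_outcome y x"
  by (simp add: transpose_outcome_def transpose_commute)

(* Up to a null set this is the conditioning event intersected with test location x; requiring
   the test cell to be unobserved makes the family invariant under exchanging cells of S. *)
definition cond_event_at ::
    "nat \<Rightarrow> nat \<Rightarrow> cell set \<Rightarrow> cell set \<Rightarrow> cell \<Rightarrow> outcome set" where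
  "cond_event_at d1 d2 S T x =
     {\<omega> \<in> cond_event d1 d2 S T. test_loc \<omega> = Some x \<and> x \<in> grid d1 d2 - obs_set d1 d2 \<omega>}"

lemma mem_cond_event_at:
  "(Z, W, F, t) \<in> cond_event_at d1 d2 S T x \<longleftrightarrow>
     t = Some x \<and> x \<in> grid d1 d2 \<and> \<not> Z x \<and>
     insert x {c \<in> grid d1 d2. Z c \<and> \<not> W c \<and> \<not> F c} = S \<and>
     {c \<in> grid d1 d2. Z c \<and> W c} = T"
  by (auto simp: cond_event_at_def cond_event_def test_loc_def obs_set_def tr_set_def
      trimmed_cal_set_def cal_set_def simp del: split_paired_Ex)

lemma transpose_outcome_cond_event_at:
  assumes "\<omega> \<in> cond_event_at d1 d2 S T x" and "y \<in> S"
  shows "transpose_outcome x y \<omega> \<in> cond_event_at d1 d2 S T y"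
proof -
  let ?G = "grid d1 d2" and ?\<tau> = "Transposition.transpose x y"
  obtain Z W F where \<omega>: "\<omega> = (Z, W, F, Some x)"
    using assms(1) by (cases \<omega>) (auto simp: mem_cond_event_at)
  have x: "x \<in> ?G" "\<not> Z x" and S: "insert x {c \<in> ?G. Z c \<and> \<not> W c \<and> \<not> F c} = S"
    and T: "{c \<in> ?G. Z c \<and> W c} = T"
    using assms(1) by (simp_all add: \<omega> mem_cond_event_at)
  have y: "y \<in> ?G" "y \<noteq> x \<Longrightarrow> Z y \<and> \<not> W y"
    using assms(2) x(1) S by auto
  have preimage: "{c \<in> ?G. P (?\<tau> c)} = ?\<tau> ` {c \<in> ?G. P c}" for P
    using x(1) y(1) by (rule Collect_transpose_eq_image)
  have "insert y {c \<in> ?G. Z (?\<tau> c) \<and> \<not> W (?\<tau> c) \<and> \<not> F (?\<tau> c)} = ?\<tau> ` S"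
    using preimage[of "\<lambda>c. Z c \<and> \<not> W c \<and> \<not> F c"] by (simp add: S[symmetric])
  also have "\<dots> = S"
    using S assms(2) by (intro transpose_image_eq) blast
  finally have S': "insert y {c \<in> ?G. Z (?\<tau> c) \<and> \<not> W (?\<tau> c) \<and> \<not> F (?\<tau> c)} = S" .
  have "{c \<in> ?G. Z (?\<tau> c) \<and> W (?\<tau> c)} = ?\<tau> ` T"
    using preimage[of "\<lambda>c. Z c \<and> W c"] T by simp
  also have "\<dots> = T"
    using T x y by (intro transpose_image_eq) auto
  finally have T': "{c \<in> ?G. Z (?\<tau> c) \<and> W (?\<tau> c)} = T" .
  show ?thesis
    using x y S' T' by (simp add: \<omega> transpose_outcome_def mem_cond_event_at)
qed

lemma bij_betw_transpose_outcome:
  assumes "x \<in> S" and "y \<in> S"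
  shows "bij_betw (transpose_outcome x y) (cond_event_at d1 d2 S T x) (cond_event_at d1 d2 S T y)"
  using assms transpose_outcome_cond_event_at[of _ d1 d2 S T y x]
  by (intro bij_betwI[where g = "transpose_outcome x y"])
     (auto simp: transpose_outcome_cond_event_at transpose_outcome_commute[of y x])

lemma pmf_split_model_transpose_outcome:
  assumes "\<omega> \<in> cond_event_at d1 d2 S T x" and "y \<in> S" and "x \<noteq> y"
    and "\<forall>c \<in> grid d1 d2. 0 \<le> p c \<and> p c \<le> 1"
  shows "pmf (split_model d1 d2 p q \<beta>) (transpose_outcome x y \<omega>) * ((1 - p x) * p y)
       = pmf (split_model d1 d2 p q \<beta>) \<omega> * (p x * (1 - p y))"
proof -
  let ?G = "grid d1 d2" and ?\<tau> = "Transposition.transpose x y"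
  obtain Z W F where \<omega>: "\<omega> = (Z, W, F, Some x)"
    using assms(1) by (cases \<omega>) (auto simp: mem_cond_event_at)
  have x: "x \<in> ?G" "\<not> Z x" and y: "y \<in> ?G" "Z y"
    using assms(1-3) by (auto simp: \<omega> mem_cond_event_at)
  have \<tau>: "?\<tau> permutes ?G"
    using x(1) y(1) by (rule permutes_swap_id)
  have unobserved: "?G - {c \<in> ?G. Z (?\<tau> c)} = ?\<tau> ` (?G - {c \<in> ?G. Z c})"
    using Collect_transpose_eq_image[OF x(1) y(1), of "Not \<circ> Z"] by (auto simp: set_diff_eq)
  have test: "pmf (test_loc_pmf (?G - {c \<in> ?G. Z (?\<tau> c)})) (Some y)
      = pmf (test_loc_pmf (?G - {c \<in> ?G. Z c})) (Some x)"
    using x by (simp add: unobserved pmf_test_loc_pmf_Some card_image in_transpose_image_iff)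
  have "pmf (Pi_pmf ?G False (\<lambda>c. bernoulli_pmf (p c))) (Z \<circ> ?\<tau>) * ((1 - p x) * p y)
      = pmf (Pi_pmf ?G False (\<lambda>c. bernoulli_pmf (p c))) Z * (p x * (1 - p y))"
    using x y assms(3,4) by (intro pmf_Pi_bernoulli_comp_transpose) auto
  then show ?thesis
    by (simp add: \<omega> transpose_outcome_def pmf_split_model test
        pmf_Pi_pmf_comp_permutes[OF finite_grid \<tau>] ac_simps)
qed

lemma prob_cond_event_at_exchange:
  assumes "x \<in> S" and "y \<in> S" and "x \<noteq> y"
    and "\<forall>c \<in> grid d1 d2. 0 \<le> p c \<and> p c \<le> 1"
  shows "measure_pmf.prob (split_model d1 d2 p q \<beta>) (cond_event_at d1 d2 S T y) * ((1 - p x) * p y)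
       = measure_pmf.prob (split_model d1 d2 p q \<beta>) (cond_event_at d1 d2 S T x) * (p x * (1 - p y))"
proof -
  let ?M = "split_model d1 d2 p q \<beta>"
  have "measure_pmf.prob ?M (cond_event_at d1 d2 S T y) * ((1 - p x) * p y)
      = infsetsum (\<lambda>\<omega>. pmf ?M \<omega> * ((1 - p x) * p y)) (cond_event_at d1 d2 S T y)"
    unfolding measure_pmf_conv_infsetsum by (rule infsetsum_cmult_left [symmetric]) (rule pmf_abs_summable)
  also have "\<dots> = infsetsum (\<lambda>\<omega>. pmf ?M (transpose_outcome x y \<omega>) * ((1 - p x) * p y))
      (cond_event_at d1 d2 S T x)"
    using infsetsum_reindex_bij_betw[OF bij_betw_transpose_outcome[OF assms(1,2)],
        of "\<lambda>\<omega>. pmf ?M \<omega> * ((1 - p x) * p y)"] by simp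
  also have "\<dots> = infsetsum (\<lambda>\<omega>. pmf ?M \<omega> * (p x * (1 - p y))) (cond_event_at d1 d2 S T x)"
    using assms(2-4) by (intro infsetsum_cong pmf_split_model_transpose_outcome) auto
  also have "\<dots> = measure_pmf.prob ?M (cond_event_at d1 d2 S T x) * (p x * (1 - p y))"
    unfolding measure_pmf_conv_infsetsum by (rule infsetsum_cmult_left) (rule pmf_abs_summable)
  finally show ?thesis .
qed

lemma prob_cond_event_at_odds:
  assumes "x \<in> S" and "y \<in> S" and "S \<subseteq> grid d1 d2"
    and "\<forall>c \<in> grid d1 d2. 0 < p c \<and> p c \<le> 1"
  shows "measure_pmf.prob (split_model d1 d2 p q \<beta>) (cond_event_at d1 d2 S T y) * odds p x
       = measure_pmf.prob (split_model d1 d2 p q \<beta>) (cond_event_at d1 d2 S T x) * odds p y"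
proof (cases "x = y")
  case False
  let ?P = "\<lambda>z. measure_pmf.prob (split_model d1 d2 p q \<beta>) (cond_event_at d1 d2 S T z)"
  have "?P y * ((1 - p x) * p y) = ?P x * (p x * (1 - p y))"
    using assms False by (intro prob_cond_event_at_exchange) auto
  moreover have "p x > 0" "p y > 0"
    using assms by auto
  ultimately show ?thesis
    by (simp add: odds_def field_simps)
qed simp

lemma prob_cond_event_at_eq_0:
  assumes "x \<in> grid d1 d2" and "p x = 1"
  shows "measure_pmf.prob (split_model d1 d2 p q \<beta>) (cond_event_at d1 d2 S T x) = 0"
proof -
  have "pmf (split_model d1 d2 p q \<beta>) \<omega> = 0" if \<omega>_in: "\<omega> \<in> cond_event_at d1 d2 S T x" for \<omega>
  proof -
    obtain Z W F t where \<omega>: "\<omega> = (Z, W, F, t)" and "\<not> Z x"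
      using \<omega>_in by (cases \<omega>) (auto simp: mem_cond_event_at)
    then have "pmf (Pi_pmf (grid d1 d2) False (\<lambda>c. bernoulli_pmf (p c))) Z = 0"
      using assms by (auto simp: pmf_Pi intro!: prod_zero bexI[of _ x])
    then show ?thesis
      by (simp add: \<omega> pmf_split_model)
  qed
  then show ?thesis
    by (auto simp: measure_pmf_zero_iff set_pmf_iff)
qed

lemma prob_cond_event_test_loc:
  "measure_pmf.prob (split_model d1 d2 p q \<beta>)
     (cond_event d1 d2 S T \<inter> {\<omega>. test_loc \<omega> = Some x})
 = measure_pmf.prob (split_model d1 d2 p q \<beta>) (cond_event_at d1 d2 S T x)"
  by (rule measure_prob_cong_0)
     (auto simp: cond_event_at_def pmf_eq_0_set_pmf simp del: split_paired_All split_paired_Ex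
       dest: split_model_test_loc_unobserved)

lemma cond_event_subset_grid:
  assumes "measure_pmf.prob (split_model d1 d2 p q \<beta>) (cond_event d1 d2 S T) > 0"
  shows "S \<subseteq> grid d1 d2"
proof -
  have "set_pmf (split_model d1 d2 p q \<beta>) \<inter> cond_event d1 d2 S T \<noteq> {}"
    using assms by (auto simp flip: measure_pmf_zero_iff)
  then obtain \<omega> where \<omega>: "\<omega> \<in> cond_event d1 d2 S T" "\<omega> \<in> set_pmf (split_model d1 d2 p q \<beta>)"
    by blast
  then obtain t where "test_loc \<omega> = Some t" and "insert t (trimmed_cal_set d1 d2 \<omega>) = S"
    by (auto simp: cond_event_def)
  with \<omega>(2) show ?thesis
    by (auto dest: split_model_test_loc_unobserved simp: trimmed_cal_set_def cal_set_def split: prod.splits)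
qed

lemma prob_cond_event_eq_sum:
  assumes "finite S"
  shows "measure_pmf.prob (split_model d1 d2 p q \<beta>) (cond_event d1 d2 S T)
       = (\<Sum>x\<in>S. measure_pmf.prob (split_model d1 d2 p q \<beta>)
            (cond_event d1 d2 S T \<inter> {\<omega>. test_loc \<omega> = Some x}))"
proof -
  let ?P = "measure_pmf.prob (split_model d1 d2 p q \<beta>)"
  have "?P (cond_event d1 d2 S T)
      = ?P (\<Union>x\<in>S. cond_event d1 d2 S T \<inter> {\<omega>. test_loc \<omega> = Some x})"
    by (rule arg_cong[where f = ?P]) (auto simp: cond_event_def)
  also have "\<dots> = (\<Sum>x\<in>S. ?P (cond_event d1 d2 S T \<inter> {\<omega>. test_loc \<omega> = Some x}))"
    using assms by (intro measure_pmf.finite_measure_finite_Union) (auto simp: disjoint_family_on_def)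
  finally show ?thesis .
qed

lemma normalized_eq_if_proportional:
  fixes a h :: "'a \<Rightarrow> real"
  assumes "finite S" and "x \<in> S"
    and "\<And>y. y \<in> S \<Longrightarrow> a y * h x = a x * h y"
    and "\<And>y. y \<in> S \<Longrightarrow> 0 \<le> h y"
    and "\<And>y. y \<in> S \<Longrightarrow> h y = 0 \<Longrightarrow> a y = 0"
    and "sum a S \<noteq> 0"
  shows "a x / sum a S = h x / sum h S"
proof -
  have "sum h S \<noteq> 0"
  proof
    assume "sum h S = 0"
    then have "\<forall>y\<in>S. h y = 0"
      using assms(1,4) sum_nonneg_eq_0_iff by blast
    then show False
      using assms(5,6) by simp
  qed
  moreover have "sum a S * h x = a x * sum h S"
    by (simp add: sum_distrib_left sum_distrib_right assms(3))
  ultimately show ?thesis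
    using assms(6) by (simp add: frac_eq_eq mult.commute)
qed

theorem lemma1:
  fixes d1 d2 :: nat and p :: "cell \<Rightarrow> real" and q \<beta> :: real
    and S T :: "cell set" and x :: cell
  assumes "d1 \<ge> 1" and "d2 \<ge> 1"
    and "\<forall>c \<in> grid d1 d2. 0 < p c \<and> p c \<le> 1"
    and "0 < q" and "q < 1" and "0 < \<beta>" and "\<beta> < 1"
    and "x \<in> S"
    and "measure_pmf.prob (split_model d1 d2 p q \<beta>) (cond_event d1 d2 S T) > 0"
  shows "measure_pmf.prob (split_model d1 d2 p q \<beta>)
           (cond_event d1 d2 S T \<inter> {\<omega>. test_loc \<omega> = Some x})
         / measure_pmf.prob (split_model d1 d2 p q \<beta>) (cond_event d1 d2 S T)
         = odds p x / (\<Sum>y\<in>S. odds p y)"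
proof -
  let ?P = "\<lambda>y. measure_pmf.prob (split_model d1 d2 p q \<beta>) (cond_event_at d1 d2 S T y)"
  have S: "S \<subseteq> grid d1 d2"
    using assms(9) by (rule cond_event_subset_grid)
  then have "finite S"
    by (rule finite_subset) simp
  have total: "measure_pmf.prob (split_model d1 d2 p q \<beta>) (cond_event d1 d2 S T) = sum ?P S"
    using \<open>finite S\<close> by (simp add: prob_cond_event_eq_sum prob_cond_event_test_loc)
  have "?P x / sum ?P S = odds p x / (\<Sum>y\<in>S. odds p y)"
  proof (rule normalized_eq_if_proportional[OF \<open>finite S\<close> assms(8)])
    fix y assume "y \<in> S"
    with S assms(3) have "0 < p y" "p y \<le> 1" and "y \<in> grid d1 d2"
      by auto
    then show "0 \<le> odds p y" and "odds p y = 0 \<Longrightarrow> ?P y = 0"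
      by (auto simp: odds_def intro: prob_cond_event_at_eq_0)
    show "?P y * odds p x = ?P x * odds p y"
      using assms(8) \<open>y \<in> S\<close> S assms(3) by (rule prob_cond_event_at_odds)
  qed (use assms(9) total in simp)
  then show ?thesis
    by (simp add: prob_cond_event_test_loc total)
qed

end
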